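(* Let $P$ be a 6-stack whose rank $r(P)$ is a (positive) multiple of $3$. Then $P$ has a retract that is a 4-tower.
   Context: All posets are finite. For a poset $P$ and $p\in P$, the rank $r(p)$ of $p$ is the largest $m$ such that there is a chain $p_0<\dots<p_m=p$ in $P$. $P$ is ranked of rank $r(P)$ if every maximal chain has exactly $r(P)+1$ elements. For $0\le i\le j$, $P(i,j)=\{p\in P:i\le r(p)\le j\}$ (induced order). A subset $Q\subseteq P$ (induced order) is a retract of $P$ if there is an order-preserving $f:P\to Q$ with $f(q)=q$ for all $q\in Q$. The 6-crown $C_6$ is the poset on $\{x_0,x_1,x_2,y_0,y_1,y_2\}$ whose only strict comparabilities are $x_0<y_0>x_1<y_1>x_2<y_2>x_0$. A 6-stack is a ranked poset $P$ of rank $n\ge1$ such that $P(i,i+1)\cong C_6$ for each $0\le i<n$. The ordinal sum of posets $P_1,\dots,P_k$ ($k\ge1$) is their disjoint union ordered by the orders of the $P_i$ together with $p<q$ whenever $p\in P_i,q\in P_j,i<j$. A 4-tower is an ordinal sum of one or more two-element antichains. *)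

theory Defs
  imports Main
begin

definition finite_poset :: "'a set \<Rightarrow> ('a \<Rightarrow> 'a \<Rightarrow> bool) \<Rightarrow> bool" where
  "finite_poset P le \<longleftrightarrow> finite P
     \<and> (\<forall>x\<in>P. le x x)
     \<and> (\<forall>x\<in>P. \<forall>y\<in>P. le x y \<and> le y x \<longrightarrow> x = y)
     \<and> (\<forall>x\<in>P. \<forall>y\<in>P. \<forall>z\<in>P. le x y \<and> le y z \<longrightarrow> le x z)"

definition strict :: "('a \<Rightarrow> 'a \<Rightarrow> bool) \<Rightarrow> 'a \<Rightarrow> 'a \<Rightarrow> bool" where
  "strict le x y \<longleftrightarrow> le x y \<and> x \<noteq> y"

definition elem_rank :: "'a set \<Rightarrow> ('a \<Rightarrow> 'a \<Rightarrow> bool) \<Rightarrow> 'a \<Rightarrow> nat" where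
  "elem_rank P le p = Max {length xs - 1 | xs. xs \<noteq> [] \<and> set xs \<subseteq> P
      \<and> sorted_wrt (strict le) xs \<and> last xs = p}"

definition is_chain :: "'a set \<Rightarrow> ('a \<Rightarrow> 'a \<Rightarrow> bool) \<Rightarrow> 'a set \<Rightarrow> bool" where
  "is_chain P le C \<longleftrightarrow> C \<subseteq> P \<and> (\<forall>x\<in>C. \<forall>y\<in>C. le x y \<or> le y x)"

definition maximal_chain :: "'a set \<Rightarrow> ('a \<Rightarrow> 'a \<Rightarrow> bool) \<Rightarrow> 'a set \<Rightarrow> bool" where
  "maximal_chain P le C \<longleftrightarrow> is_chain P le C \<and> (\<forall>D. is_chain P le D \<and> C \<subseteq> D \<longrightarrow> D = C)"

definition ranked_of_rank :: "'a set \<Rightarrow> ('a \<Rightarrow> 'a \<Rightarrow> bool) \<Rightarrow> nat \<Rightarrow> bool" where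
  "ranked_of_rank P le n \<longleftrightarrow> (\<forall>C. maximal_chain P le C \<longrightarrow> card C = n + 1)"

text \<open>P(i,j), with the induced order (restriction of le).\<close>
definition rank_slice :: "'a set \<Rightarrow> ('a \<Rightarrow> 'a \<Rightarrow> bool) \<Rightarrow> nat \<Rightarrow> nat \<Rightarrow> 'a set" where
  "rank_slice P le i j = {p \<in> P. i \<le> elem_rank P le p \<and> elem_rank P le p \<le> j}"

definition order_isomorphic ::
  "'a set \<Rightarrow> ('a \<Rightarrow> 'a \<Rightarrow> bool) \<Rightarrow> 'b set \<Rightarrow> ('b \<Rightarrow> 'b \<Rightarrow> bool) \<Rightarrow> bool" where
  "order_isomorphic P le Q le' \<longleftrightarrow>
     (\<exists>f. bij_betw f P Q \<and> (\<forall>x\<in>P. \<forall>y\<in>P. le x y \<longleftrightarrow> le' (f x) (f y)))"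

text \<open>The 6-crown: x_0,x_1,x_2 encoded as 0,1,2 and y_0,y_1,y_2 as 3,4,5;
  strict comparabilities x0<y0>x1<y1>x2<y2>x0.\<close>
definition crown6 :: "nat set" where
  "crown6 = {0,1,2,3,4,5}"

definition crown6_le :: "nat \<Rightarrow> nat \<Rightarrow> bool" where
  "crown6_le a b \<longleftrightarrow> a = b \<or> (a, b) \<in> {(0,3), (1,3), (1,4), (2,4), (2,5), (0,5)}"

definition six_stack :: "'a set \<Rightarrow> ('a \<Rightarrow> 'a \<Rightarrow> bool) \<Rightarrow> nat \<Rightarrow> bool" where
  "six_stack P le n \<longleftrightarrow> finite_poset P le \<and> n \<ge> 1 \<and> ranked_of_rank P le n
     \<and> (\<forall>i<n. order_isomorphic (rank_slice P le i (i+1)) le crown6 crown6_le)"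

definition is_retract :: "'a set \<Rightarrow> ('a \<Rightarrow> 'a \<Rightarrow> bool) \<Rightarrow> 'a set \<Rightarrow> bool" where
  "is_retract P le Q \<longleftrightarrow> Q \<subseteq> P \<and> (\<exists>f. f ` P \<subseteq> Q
     \<and> (\<forall>x\<in>P. \<forall>y\<in>P. le x y \<longrightarrow> le (f x) (f y)) \<and> (\<forall>q\<in>Q. f q = q))"

text \<open>Ordinal sum of k two-element antichains, modelled on pairs (i,b), i<k, b<2:
  (i,b) \<le> (j,c) iff equal or i<j.\<close>
definition tower4 :: "nat \<Rightarrow> (nat \<times> nat) set" where
  "tower4 k = {0..<k} \<times> {0,1}"

definition tower4_le :: "nat \<times> nat \<Rightarrow> nat \<times> nat \<Rightarrow> bool" where
  "tower4_le a b \<longleftrightarrow> a = b \<or> fst a < fst b"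

definition is_four_tower :: "'a set \<Rightarrow> ('a \<Rightarrow> 'a \<Rightarrow> bool) \<Rightarrow> bool" where
  "is_four_tower Q le \<longleftrightarrow> (\<exists>k\<ge>1. order_isomorphic Q le (tower4 k) tower4_le)"

end

theory Submission
  imports Defs
begin

text \<open>
  Label the three elements of every level of a 6-stack of rank n by 0, 1, 2 such that an element
  of level i lies below an element of level i + 1 exactly when their labels differ: level 0 is
  labelled by the crown isomorphism, and each element of level i + 1 inherits the label of the
  unique element of level i it is not above. Elements two or more levels apart are always
  comparable (go through the element of the intermediate level carrying the third label), so the
  stack is isomorphic to the standard stack on {0..n} \<times> {0,1,2}. When n = 3m, the standard stack
  retracts onto the levels 3t restricted to labels 0, 1 together with the label-2 elements of the
  levels 3t + 1 and 3t + 2; these form a 4-tower whose 2m + 1 antichains are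
  {(3t,0), (3t,1)} and {(3t+1,2), (3t+2,2)}.
\<close>

lemma sorted_wrt_strict_distinct: "sorted_wrt (strict le) xs \<Longrightarrow> distinct xs"
  by (induction xs) (auto simp: strict_def)

lemma sorted_wrt_last:
  "sorted_wrt R xs \<Longrightarrow> a \<in> set xs \<Longrightarrow> a = last xs \<or> R a (last xs)"
  by (induction xs) auto

lemma sorted_wrt_comparable:
  "sorted_wrt R xs \<Longrightarrow> a \<in> set xs \<Longrightarrow> b \<in> set xs \<Longrightarrow> a = b \<or> R a b \<or> R b a"
  by (induction xs) auto

lemma bij_betw_split:
  assumes "bij_betw f (A \<union> B) (C \<union> D)" "f ` A \<subseteq> C" "f ` B \<subseteq> D" "C \<inter> D = {}"
  shows "bij_betw f A C" "bij_betw f B D"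
  using assms unfolding bij_betw_def inj_on_def by blast+

section \<open>Order isomorphisms and retracts\<close>

lemma order_isomorphic_trans:
  assumes "order_isomorphic A leA B leB" "order_isomorphic B leB C leC"
  shows "order_isomorphic A leA C leC"
proof -
  obtain f where f: "bij_betw f A B" "\<forall>x\<in>A. \<forall>y\<in>A. leA x y \<longleftrightarrow> leB (f x) (f y)"
    using assms(1) unfolding order_isomorphic_def by blast
  obtain g where g: "bij_betw g B C" "\<forall>x\<in>B. \<forall>y\<in>B. leB x y \<longleftrightarrow> leC (g x) (g y)"
    using assms(2) unfolding order_isomorphic_def by blast
  have "bij_betw (g \<circ> f) A C" using f(1) g(1) by (rule bij_betw_trans)
  moreover have "\<forall>x\<in>A. \<forall>y\<in>A. leA x y \<longleftrightarrow> leC ((g \<circ> f) x) ((g \<circ> f) y)"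
    using f g bij_betw_apply[OF f(1)] by simp
  ultimately show ?thesis unfolding order_isomorphic_def by blast
qed

lemma order_isomorphic_image:
  assumes "bij_betw h P P'" "\<And>x y. x \<in> P \<Longrightarrow> y \<in> P \<Longrightarrow> le x y \<longleftrightarrow> le' (h x) (h y)"
    and "Q \<subseteq> P"
  shows "order_isomorphic Q le (h ` Q) le'"
proof -
  have "bij_betw h Q (h ` Q)"
    using assms(1,3) unfolding bij_betw_def by (blast intro: inj_on_subset)
  then show ?thesis unfolding order_isomorphic_def using assms(2,3) by blast
qed

lemma is_retract_pullback:
  assumes h: "bij_betw h P P'" "\<And>x y. x \<in> P \<Longrightarrow> y \<in> P \<Longrightarrow> le x y \<longleftrightarrow> le' (h x) (h y)"
    and retract: "is_retract P' le' Q'"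
  shows "is_retract P le (inv_into P h ` Q')"
proof -
  define g where "g = inv_into P h"
  obtain f where f: "f ` P' \<subseteq> Q'" "\<forall>x\<in>P'. \<forall>y\<in>P'. le' x y \<longrightarrow> le' (f x) (f y)" "\<forall>q\<in>Q'. f q = q"
    using retract unfolding is_retract_def by blast
  have QP: "Q' \<subseteq> P'" using retract unfolding is_retract_def by blast
  have g_into: "g u \<in> P" if "u \<in> P'" for u
    using that h(1) unfolding g_def by (metis bij_betw_imp_surj_on inv_into_into)
  have h_g: "h (g u) = u" if "u \<in> P'" for u
    using that h(1) unfolding g_def by (meson bij_betw_inv_into_right)
  have h_into: "h x \<in> P'" if "x \<in> P" for x using bij_betw_apply[OF h(1) that] .
  let ?r = "g \<circ> f \<circ> h"
  have "?r ` P \<subseteq> g ` Q'" using f(1) h_into by auto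
  moreover have "le (?r x) (?r y)" if "x \<in> P" "y \<in> P" "le x y" for x y
  proof -
    have "f (h x) \<in> P'" "f (h y) \<in> P'" using f(1) QP h_into that(1,2) by blast+
    then show ?thesis using h f(2) h_into that g_into h_g by simp
  qed
  moreover have "?r q = q" if "q \<in> g ` Q'" for q
    using that f(3) QP h_g by auto
  moreover have "g ` Q' \<subseteq> P" using QP g_into by blast
  ultimately show ?thesis unfolding is_retract_def g_def by blast
qed

lemma four_tower_retract_pullback:
  assumes "order_isomorphic P le P' le'" "is_retract P' le' Q'" "is_four_tower Q' le'"
  shows "\<exists>Q. is_retract P le Q \<and> is_four_tower Q le"
proof -
  obtain h where h: "bij_betw h P P'" "\<forall>x\<in>P. \<forall>y\<in>P. le x y \<longleftrightarrow> le' (h x) (h y)"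
    using assms(1) unfolding order_isomorphic_def by blast
  define Q where "Q = inv_into P h ` Q'"
  have retract: "is_retract P le Q"
    unfolding Q_def using h assms(2) by (intro is_retract_pullback) auto
  have "Q' \<subseteq> P'" using assms(2) unfolding is_retract_def by blast
  then have "h (inv_into P h u) = u" if "u \<in> Q'" for u
    using that h(1) by (meson bij_betw_inv_into_right subsetD)
  then have "h ` Q = Q'" unfolding Q_def image_image by force
  moreover have "Q \<subseteq> P" using retract unfolding is_retract_def by blast
  ultimately have "order_isomorphic Q le Q' le'"
    using order_isomorphic_image[OF h(1)] h(2) by metis
  then have "is_four_tower Q le"
    using assms(3) order_isomorphic_trans unfolding is_four_tower_def by blast
  then show ?thesis using retract by blast
qed

section \<open>Ranks in finite posets\<close>

locale fin_poset =
  fixes P :: "'a set" and le :: "'a \<Rightarrow> 'a \<Rightarrow> bool"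
  assumes finite_poset: "finite_poset P le"
begin

lemma finite_carrier: "finite P"
  using finite_poset unfolding finite_poset_def by blast

lemma refl: "x \<in> P \<Longrightarrow> le x x"
  using finite_poset unfolding finite_poset_def by blast

lemma antisym: "x \<in> P \<Longrightarrow> y \<in> P \<Longrightarrow> le x y \<Longrightarrow> le y x \<Longrightarrow> x = y"
  using finite_poset unfolding finite_poset_def by blast

lemma trans: "x \<in> P \<Longrightarrow> y \<in> P \<Longrightarrow> z \<in> P \<Longrightarrow> le x y \<Longrightarrow> le y z \<Longrightarrow> le x z"
  using finite_poset unfolding finite_poset_def by blast

abbreviation rank :: "'a \<Rightarrow> nat" where
  "rank \<equiv> elem_rank P le"

definition chain_to :: "'a \<Rightarrow> 'a list \<Rightarrow> bool" where
  "chain_to p xs \<longleftrightarrow> xs \<noteq> [] \<and> set xs \<subseteq> P \<and> sorted_wrt (strict le) xs \<and> last xs = p"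

lemma rank_eq_Max: "rank p = Max {length xs - 1 | xs. chain_to p xs}"
  unfolding elem_rank_def chain_to_def by simp

lemma chain_to_length: "chain_to p xs \<Longrightarrow> length xs \<le> card P"
  unfolding chain_to_def
  by (metis card_mono distinct_card finite_carrier sorted_wrt_strict_distinct)

lemma finite_chain_lengths: "finite {length xs - 1 | xs. chain_to p xs}"
  by (rule finite_subset[of _ "{..card P}"]) (auto dest: chain_to_length)

lemma rank_ge: "chain_to p xs \<Longrightarrow> length xs - 1 \<le> rank p"
  unfolding rank_eq_Max by (rule Max_ge[OF finite_chain_lengths]) blast

lemma rank_witness:
  assumes "p \<in> P"
  obtains xs where "chain_to p xs" "length xs = Suc (rank p)"
proof -
  have "chain_to p [p]" using assms unfolding chain_to_def by simp
  then have "rank p \<in> {length xs - 1 | xs. chain_to p xs}"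
    unfolding rank_eq_Max by (intro Max_in[OF finite_chain_lengths]) blast
  then show ?thesis using that unfolding chain_to_def by force
qed

lemma rank_strict_mono:
  assumes "x \<in> P" "y \<in> P" "le x y" "x \<noteq> y"
  shows "rank x < rank y"
proof -
  obtain xs where xs: "chain_to x xs" "length xs = Suc (rank x)"
    using rank_witness[OF assms(1)] .
  have "strict le a y" if "a \<in> set xs" for a
  proof -
    have a: "a = x \<or> strict le a x" "a \<in> P"
      using xs(1) sorted_wrt_last[of "strict le" xs a] that unfolding chain_to_def by auto
    have "le a y" using a assms trans[OF a(2) assms(1,2)] unfolding strict_def by blast
    moreover have "a \<noteq> y" using a assms antisym[OF assms(1,2,3)] unfolding strict_def by blast
    ultimately show ?thesis unfolding strict_def by blast
  qed
  then have "chain_to y (xs @ [y])"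
    using xs(1) assms(2) unfolding chain_to_def by (auto simp: sorted_wrt_append)
  then show ?thesis using rank_ge xs(2) by fastforce
qed

lemma rank_covered:
  assumes "p \<in> P" "rank p > 0"
  obtains z where "z \<in> P" "le z p" "z \<noteq> p" "Suc (rank z) = rank p"
proof -
  obtain xs where xs: "chain_to p xs" "length xs = Suc (rank p)"
    using rank_witness[OF assms(1)] .
  define ys where "ys = butlast xs"
  have xs_ys: "xs = ys @ [p]"
    using xs(1) unfolding ys_def chain_to_def by (metis append_butlast_last_id)
  have "ys \<noteq> []" using xs(2) assms(2) xs_ys by auto
  define z where "z = last ys"
  have z: "z \<in> P" "strict le z p" and "chain_to z ys"
    using xs(1) \<open>ys \<noteq> []\<close> unfolding xs_ys z_def chain_to_def by (auto simp: sorted_wrt_append)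
  from \<open>chain_to z ys\<close> have "length ys - 1 \<le> rank z" by (rule rank_ge)
  moreover have "rank z < rank p"
    using rank_strict_mono[OF z(1) assms(1)] z(2) unfolding strict_def by blast
  ultimately show ?thesis using that z xs(2) xs_ys unfolding strict_def by force
qed

lemma chain_extends_to_maximal:
  "is_chain P le C \<Longrightarrow> \<exists>D. maximal_chain P le D \<and> C \<subseteq> D"
proof (induction "card P - card C" arbitrary: C rule: less_induct)
  case less
  show ?case
  proof (cases "maximal_chain P le C")
    case False
    then obtain D where D: "is_chain P le D" "C \<subset> D"
      using less.prems unfolding maximal_chain_def by blast
    then have "D \<subseteq> P" unfolding is_chain_def by blast
    then have "card C < card D" "card D \<le> card P"
      using D(2) finite_carrier by (auto intro: psubset_card_mono card_mono finite_subset)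
    then show ?thesis using less.hyps[of D] D by force
  qed blast
qed

lemma rank_le_of_ranked:
  assumes "ranked_of_rank P le n" "p \<in> P"
  shows "rank p \<le> n"
proof -
  obtain xs where xs: "chain_to p xs" "length xs = Suc (rank p)"
    using rank_witness[OF assms(2)] .
  have "is_chain P le (set xs)"
    unfolding is_chain_def
  proof (intro conjI ballI)
    show "set xs \<subseteq> P" using xs(1) unfolding chain_to_def by blast
    fix a b assume ab: "a \<in> set xs" "b \<in> set xs"
    then have "a = b \<or> strict le a b \<or> strict le b a"
      using xs(1) sorted_wrt_comparable[of "strict le" xs a b] unfolding chain_to_def by simp
    moreover have "a \<in> P" using ab xs(1) unfolding chain_to_def by blast
    ultimately show "le a b \<or> le b a" using refl unfolding strict_def by blast
  qed
  then obtain D where D: "maximal_chain P le D" "set xs \<subseteq> D"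
    using chain_extends_to_maximal by blast
  have "finite D" using D(1) finite_carrier
    unfolding maximal_chain_def is_chain_def by (blast intro: finite_subset)
  then have "card (set xs) \<le> card D" using D(2) by (rule card_mono)
  moreover have "card (set xs) = Suc (rank p)"
    using xs sorted_wrt_strict_distinct[of le xs] unfolding chain_to_def by (simp add: distinct_card)
  moreover have "card D = n + 1" using assms(1) D(1) unfolding ranked_of_rank_def by blast
  ultimately show ?thesis by simp
qed

end

lemma crown6_split: "crown6 = {0,1,2} \<union> {3,4,5}"
  unfolding crown6_def by auto

lemma crown6_strict_le: "crown6_le b c \<Longrightarrow> b \<noteq> c \<Longrightarrow> b \<in> {0,1,2} \<and> c \<in> {3,4,5}"
  unfolding crown6_le_def by auto

lemma crown6_exists_below: "c \<in> {3,4,5} \<Longrightarrow> \<exists>b\<in>crown6. crown6_le b c \<and> b \<noteq> c"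
  unfolding crown6_def crown6_le_def by auto

lemma crown6_le_iff:
  "a \<in> {0,1,2} \<Longrightarrow> c \<in> {3,4,5} \<Longrightarrow> crown6_le a c \<longleftrightarrow> a \<noteq> (c + 2) mod 3"
  unfolding crown6_le_def by (elim insertE emptyE) simp_all

lemma crown6_incomparable_bij: "bij_betw (\<lambda>c. (c + 2) mod 3) {3,4,5::nat} {0,1,2}"
  by (simp add: bij_betw_def inj_on_def insert_commute)

lemma exists_third_label: "\<exists>c\<in>{0,1,2::nat}. c \<noteq> a \<and> c \<noteq> b"
  by (cases "a = 0 \<or> b = 0"; cases "a = 1 \<or> b = 1") auto

section \<open>The standard 6-stack\<close>

text \<open>Element (i, a) sits on level i with label a.\<close>

definition std_stack :: "nat \<Rightarrow> (nat \<times> nat) set" where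
  "std_stack n = {..n} \<times> {0,1,2}"

definition std_stack_le :: "nat \<times> nat \<Rightarrow> nat \<times> nat \<Rightarrow> bool" where
  "std_stack_le x y \<longleftrightarrow> x = y \<or> (fst y = Suc (fst x) \<and> snd x \<noteq> snd y) \<or> fst x + 2 \<le> fst y"

locale six_stack_poset =
  fixes P :: "'a set" and le :: "'a \<Rightarrow> 'a \<Rightarrow> bool" and n :: nat
  assumes six_stack: "six_stack P le n"

sublocale six_stack_poset \<subseteq> fin_poset
  using six_stack unfolding six_stack_def by unfold_locales blast

context six_stack_poset
begin

lemma ranked: "ranked_of_rank P le n"
  using six_stack unfolding six_stack_def by blast

definition level :: "nat \<Rightarrow> 'a set" where
  "level i = {p \<in> P. rank p = i}"

lemma level_le: "x \<in> level i \<Longrightarrow> i \<le> n"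
  unfolding level_def using rank_le_of_ranked[OF ranked] by auto

lemma rank_slice_levels: "rank_slice P le i (i + 1) = level i \<union> level (Suc i)"
  unfolding rank_slice_def level_def by auto

definition crown_iso :: "nat \<Rightarrow> 'a \<Rightarrow> nat" where
  "crown_iso i = (SOME g. bij_betw g (rank_slice P le i (i + 1)) crown6
     \<and> (\<forall>x\<in>rank_slice P le i (i + 1). \<forall>y\<in>rank_slice P le i (i + 1).
          le x y \<longleftrightarrow> crown6_le (g x) (g y)))"

lemma crown_iso:
  assumes "i < n"
  shows "bij_betw (crown_iso i) (level i \<union> level (Suc i)) crown6"
    and "x \<in> level i \<union> level (Suc i) \<Longrightarrow> y \<in> level i \<union> level (Suc i) \<Longrightarrow>
           le x y \<longleftrightarrow> crown6_le (crown_iso i x) (crown_iso i y)"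
proof -
  have "order_isomorphic (rank_slice P le i (i + 1)) le crown6 crown6_le"
    using six_stack assms unfolding six_stack_def by blast
  then have "bij_betw (crown_iso i) (rank_slice P le i (i + 1)) crown6
     \<and> (\<forall>x\<in>rank_slice P le i (i + 1). \<forall>y\<in>rank_slice P le i (i + 1).
          le x y \<longleftrightarrow> crown6_le (crown_iso i x) (crown_iso i y))"
    unfolding order_isomorphic_def crown_iso_def by (rule someI_ex)
  then show "bij_betw (crown_iso i) (level i \<union> level (Suc i)) crown6"
    and "x \<in> level i \<union> level (Suc i) \<Longrightarrow> y \<in> level i \<union> level (Suc i) \<Longrightarrow>
           le x y \<longleftrightarrow> crown6_le (crown_iso i x) (crown_iso i y)"
    unfolding rank_slice_levels by blast+
qed

lemma crown_iso_lower: "i < n \<Longrightarrow> crown_iso i ` level i \<subseteq> {0,1,2}"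
proof
  fix c assume "i < n" "c \<in> crown_iso i ` level i"
  then obtain x where x: "x \<in> level i" "c = crown_iso i x" by blast
  have "c \<in> crown6" using x bij_betw_apply[OF crown_iso(1)[OF \<open>i < n\<close>]] by blast
  moreover have "c \<notin> {3,4,5}"
  proof
    assume "c \<in> {3,4,5}"
    then obtain b where b: "b \<in> crown6" "crown6_le b c" "b \<noteq> c"
      using crown6_exists_below by blast
    then obtain z where z: "z \<in> level i \<union> level (Suc i)" "crown_iso i z = b"
      using crown_iso(1)[OF \<open>i < n\<close>] by (metis bij_betw_imp_surj_on imageE)
    then have "le z x" "z \<noteq> x" using crown_iso(2)[OF \<open>i < n\<close> z(1)] x b by auto
    then have "rank z < rank x" using z(1) x(1) rank_strict_mono unfolding level_def by blast
    then show False using z(1) x(1) unfolding level_def by auto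
  qed
  ultimately show "c \<in> {0,1,2}" unfolding crown6_split by blast
qed

lemma crown_iso_upper: "i < n \<Longrightarrow> crown_iso i ` level (Suc i) \<subseteq> {3,4,5}"
proof
  fix c assume "i < n" "c \<in> crown_iso i ` level (Suc i)"
  then obtain y where y: "y \<in> level (Suc i)" "c = crown_iso i y" by blast
  then have "y \<in> P" "0 < rank y" unfolding level_def by auto
  then obtain z where z: "z \<in> P" "le z y" "z \<noteq> y" "Suc (rank z) = rank y"
    by (rule rank_covered)
  then have "z \<in> level i" using y unfolding level_def by simp
  then have "crown6_le (crown_iso i z) c" "crown_iso i z \<noteq> c"
    using crown_iso[OF \<open>i < n\<close>] y z(2,3) unfolding bij_betw_def inj_on_def by auto
  then show "c \<in> {3,4,5}" using crown6_strict_le by blast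
qed

lemma crown_iso_levels:
  assumes "i < n"
  shows "bij_betw (crown_iso i) (level i) {0,1,2}"
    and "bij_betw (crown_iso i) (level (Suc i)) {3,4,5}"
  using bij_betw_split[OF crown_iso(1)[OF assms, unfolded crown6_split]
      crown_iso_lower[OF assms] crown_iso_upper[OF assms]] by auto

text \<open>The unique element of level i that is not below y.\<close>

definition mate :: "nat \<Rightarrow> 'a \<Rightarrow> 'a" where
  "mate i y = inv_into (level i) (crown_iso i) ((crown_iso i y + 2) mod 3)"

lemma mate_bij: "i < n \<Longrightarrow> bij_betw (mate i) (level (Suc i)) (level i)"
  using bij_betw_trans[OF bij_betw_trans[OF crown_iso_levels(2) crown6_incomparable_bij]
      bij_betw_inv_into[OF crown_iso_levels(1)]]
  unfolding mate_def comp_def by simp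

lemma le_iff_ne_mate:
  assumes "i < n" "x \<in> level i" "y \<in> level (Suc i)"
  shows "le x y \<longleftrightarrow> x \<noteq> mate i y"
proof -
  have lower: "bij_betw (crown_iso i) (level i) {0,1,2}" using crown_iso_levels(1)[OF assms(1)] .
  have mod3_range: "(crown_iso i y + 2) mod 3 \<in> {0,1,2}" by auto
  have "le x y \<longleftrightarrow> crown6_le (crown_iso i x) (crown_iso i y)"
    using crown_iso(2)[OF assms(1)] assms(2,3) by blast
  also have "\<dots> \<longleftrightarrow> crown_iso i x \<noteq> (crown_iso i y + 2) mod 3"
    using crown6_le_iff bij_betw_apply[OF lower assms(2)]
      bij_betw_apply[OF crown_iso_levels(2)[OF assms(1)] assms(3)] by blast
  also have "\<dots> \<longleftrightarrow> crown_iso i x \<noteq> crown_iso i (mate i y)"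
    unfolding mate_def using lower mod3_range by (simp add: bij_betw_inv_into_right)
  also have "\<dots> \<longleftrightarrow> x \<noteq> mate i y"
    using lower assms(2) bij_betw_apply[OF mate_bij[OF assms(1)] assms(3)]
    unfolding bij_betw_def inj_on_def by metis
  finally show ?thesis .
qed

primrec label :: "nat \<Rightarrow> 'a \<Rightarrow> nat" where
  "label 0 x = crown_iso 0 x"
| "label (Suc i) y = label i (mate i y)"

lemma label_bij: "i \<le> n \<Longrightarrow> bij_betw (label i) (level i) {0,1,2}"
proof (induction i)
  case 0
  have "0 < n" using six_stack unfolding six_stack_def by simp
  moreover have "label 0 = crown_iso 0" by auto
  ultimately show ?case using crown_iso_levels(1) by metis
next
  case (Suc i)
  have "label (Suc i) = label i \<circ> mate i" by auto
  then show ?case using bij_betw_trans[OF mate_bij Suc.IH] Suc.prems by (simp only: Suc_le_eq)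
qed

lemma label_in: "x \<in> level i \<Longrightarrow> label i x \<in> {0,1,2}"
  using bij_betw_apply[OF label_bij[OF level_le]] by blast

lemma label_surj:
  assumes "i \<le> n" "c \<in> {0,1,2}"
  obtains y where "y \<in> level i" "label i y = c"
proof -
  have "c \<in> label i ` level i" using bij_betw_imp_surj_on[OF label_bij[OF assms(1)]] assms(2) by simp
  then show thesis using that by blast
qed

lemma le_iff_label_ne:
  assumes "i < n" "x \<in> level i" "y \<in> level (Suc i)"
  shows "le x y \<longleftrightarrow> label i x \<noteq> label (Suc i) y"
proof -
  have "bij_betw (label i) (level i) {0,1,2}" using label_bij assms(1) by simp
  moreover have "mate i y \<in> level i" using bij_betw_apply[OF mate_bij[OF assms(1)] assms(3)] .
  ultimately have "x \<noteq> mate i y \<longleftrightarrow> label i x \<noteq> label i (mate i y)"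
    using assms(2) unfolding bij_betw_def inj_on_def by metis
  then show ?thesis using le_iff_ne_mate[OF assms] by simp
qed

lemma le_if_two_levels_apart:
  "x \<in> level i \<Longrightarrow> z \<in> level (i + 2 + d) \<Longrightarrow> le x z"
proof (induction d arbitrary: i x)
  case 0
  obtain c where c: "c \<in> {0,1,2}" "c \<noteq> label i x" "c \<noteq> label (Suc (Suc i)) z"
    using exists_third_label by blast
  have "Suc (Suc i) \<le> n" using level_le[OF "0.prems"(2)] by simp
  obtain y where y: "y \<in> level (Suc i)" "label (Suc i) y = c"
    using label_surj[OF Suc_leD[OF \<open>Suc (Suc i) \<le> n\<close>] c(1)] .
  have "le x y" "le y z"
    using le_iff_label_ne[of i x y] le_iff_label_ne[of "Suc i" y z] \<open>Suc (Suc i) \<le> n\<close> 0 y c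
    by auto
  then show ?case using trans 0 y unfolding level_def by blast
next
  case (Suc d)
  obtain c where c: "c \<in> {0,1,2}" "c \<noteq> label i x"
    using exists_third_label by blast
  have "Suc i < n" using level_le[OF Suc.prems(2)] by simp
  obtain y where y: "y \<in> level (Suc i)" "label (Suc i) y = c"
    using label_surj[OF less_imp_le[OF \<open>Suc i < n\<close>] c(1)] .
  have "le x y" using le_iff_label_ne[of i x y] \<open>Suc i < n\<close> Suc.prems(1) y c by auto
  moreover have "le y z" using Suc.IH[OF y(1)] Suc.prems(2) by simp
  ultimately show ?case using trans Suc.prems y unfolding level_def by blast
qed

definition std_coord :: "'a \<Rightarrow> nat \<times> nat" where
  "std_coord x = (rank x, label (rank x) x)"

lemma le_iff_std_stack_le:
  assumes "x \<in> P" "y \<in> P"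
  shows "le x y \<longleftrightarrow> std_stack_le (std_coord x) (std_coord y)"
proof -
  have x: "x \<in> level (rank x)" and y: "y \<in> level (rank y)" using assms unfolding level_def by auto
  consider "rank y < rank x" | "rank x = rank y" | "rank y = Suc (rank x)" | "rank x + 2 \<le> rank y"
    by linarith
  then show ?thesis
  proof cases
    case 1
    then show ?thesis using rank_strict_mono[OF assms] unfolding std_stack_le_def std_coord_def by auto
  next
    case 2
    have "le x y \<longleftrightarrow> x = y" using rank_strict_mono[OF assms] 2 refl[OF assms(1)] by auto
    also have "\<dots> \<longleftrightarrow> label (rank x) x = label (rank x) y"
      using label_bij[OF level_le[OF x]] x y 2 unfolding bij_betw_def inj_on_def by metis
    finally show ?thesis using 2 unfolding std_stack_le_def std_coord_def by auto
  next
    case 3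
    then show ?thesis
      using le_iff_label_ne[of "rank x" x y] level_le[OF y] x y unfolding std_stack_le_def std_coord_def
      by auto
  next
    case 4
    then obtain d where "rank y = rank x + 2 + d" using le_Suc_ex by blast
    then have "le x y" using le_if_two_levels_apart[OF x] y by simp
    then show ?thesis using 4 unfolding std_stack_le_def std_coord_def by simp
  qed
qed

lemma std_coord_bij: "bij_betw std_coord P (std_stack n)"
proof -
  have "inj_on std_coord P"
  proof
    fix x y assume "x \<in> P" "y \<in> P" "std_coord x = std_coord y"
    then show "x = y" using le_iff_std_stack_le antisym unfolding std_stack_le_def by metis
  qed
  moreover have "std_coord ` P \<subseteq> std_stack n"
    using label_in rank_le_of_ranked[OF ranked]
    unfolding std_coord_def std_stack_def level_def by fastforce
  moreover have "std_stack n \<subseteq> std_coord ` P"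
  proof
    fix z assume "z \<in> std_stack n"
    then obtain i a where z: "z = (i, a)" and i: "i \<le> n" and a: "a \<in> {0,1,2}"
      unfolding std_stack_def by blast
    obtain y where "y \<in> level i" "label i y = a" using label_surj[OF i a] .
    then show "z \<in> std_coord ` P" using z unfolding std_coord_def level_def by force
  qed
  ultimately show ?thesis unfolding bij_betw_def by blast
qed

end

theorem six_stack_order_isomorphic_std_stack:
  assumes "six_stack P le n"
  shows "order_isomorphic P le (std_stack n) std_stack_le"
proof -
  interpret six_stack_poset P le n using assms by unfold_locales
  show ?thesis
    unfolding order_isomorphic_def using std_coord_bij le_iff_std_stack_le by blast
qed

section \<open>Folding the standard stack onto a 4-tower\<close>

definition std_core :: "nat \<Rightarrow> (nat \<times> nat) set" where
  "std_core n = {(i, a). i \<le> n \<and> (if i mod 3 = 0 then a \<in> {0,1} else a = 2)}"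

lemma mod3_cases:
  fixes i :: nat
  obtains (0) t where "i = 3 * t" | (1) t where "i = 3 * t + 1" | (2) t where "i = 3 * t + 2"
proof -
  have "i = 3 * (i div 3) + i mod 3" by simp
  moreover have "i mod 3 = 0 \<or> i mod 3 = 1 \<or> i mod 3 = 2" by presburger
  ultimately show thesis using that by (metis add.right_neutral)
qed

definition core_to_tower :: "nat \<times> nat \<Rightarrow> nat \<times> nat" where
  "core_to_tower = (\<lambda>(i, a).
     if i mod 3 = 0 then (2 * (i div 3), a) else (2 * (i div 3) + 1, i mod 3 - 1))"

lemma core_to_tower_simps:
  "core_to_tower (3 * t, a) = (2 * t, a)"
  "core_to_tower (3 * t + 1, a) = (2 * t + 1, 0)"
  "core_to_tower (3 * t + 2, a) = (2 * t + 1, 1)"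
  unfolding core_to_tower_def by (simp_all add: mod_Suc div_Suc)

lemma std_core_cases:
  assumes "x \<in> std_core n"
  obtains (lower) t a where "x = (3 * t, a)" "a \<in> {0,1}" "3 * t \<le> n"
    | (upper1) t where "x = (3 * t + 1, 2)" "3 * t + 1 \<le> n"
    | (upper2) t where "x = (3 * t + 2, 2)" "3 * t + 2 \<le> n"
proof -
  obtain i a where x: "x = (i, a)" and i: "i \<le> n" and a: "if i mod 3 = 0 then a \<in> {0,1} else a = 2"
    using assms unfolding std_core_def by blast
  show thesis
  proof (cases i rule: mod3_cases)
    case (0 t)
    then show thesis using that(1)[of t a] x i a by simp
  next
    case (1 t)
    then show thesis using that(2)[of t] x i a by (simp add: mod_Suc)
  next
    case (2 t)
    then show thesis using that(3)[of t] x i a by (simp add: mod_Suc)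
  qed
qed

definition std_fold :: "nat \<times> nat \<Rightarrow> nat \<times> nat" where
  "std_fold = (\<lambda>(i, a).
     if i mod 3 = 0 then (i, if a = 2 then 0 else a)
     else if i mod 3 = 1 then (if a = 0 then (i + 1, 2) else if a = 1 then (i - 1, 0) else (i, 2))
     else if a = 0 then (i - 1, 2) else if a = 1 then (i + 1, 0) else (i, 2))"

lemma std_fold_simps:
  "std_fold (3 * t, a) = (3 * t, if a = 2 then 0 else a)"
  "std_fold (3 * t + 1, a) = (if a = 0 then (3 * t + 2, 2) else if a = 1 then (3 * t, 0) else (3 * t + 1, 2))"
  "std_fold (3 * t + 2, a) = (if a = 0 then (3 * t + 1, 2) else if a = 1 then (3 * t + 3, 0) else (3 * t + 2, 2))"
  unfolding std_fold_def by (simp_all add: mod_Suc)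

lemma std_fold_level: "fst x \<le> Suc (fst (std_fold x)) \<and> fst (std_fold x) \<le> Suc (fst x)"
  unfolding std_fold_def by (auto split: prod.split)

lemma std_fold_mono:
  assumes "x \<in> std_stack n" "y \<in> std_stack n" "std_stack_le x y"
  shows "std_stack_le (std_fold x) (std_fold y)"
proof -
  obtain i a j b where xy: "x = (i, a)" "y = (j, b)" and ab: "a \<in> {0,1,2}" "b \<in> {0,1,2}"
    using assms(1,2) unfolding std_stack_def by blast
  have i: "i mod 3 = 0 \<or> i mod 3 = 1 \<or> i mod 3 = 2" by presburger
  consider "j = i" | "j = Suc i" | "j = Suc (Suc i)" | "j = Suc (Suc (Suc i))" | "i + 4 \<le> j"
    using assms(3) unfolding xy std_stack_le_def by force
  then show ?thesis
  proof cases
    case 5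
    then show ?thesis using std_fold_level[of x] std_fold_level[of y] unfolding std_stack_le_def xy by auto
  qed (use assms(3) ab i in \<open>auto simp: xy std_stack_le_def std_fold_def mod_Suc\<close>)
qed

lemma std_fold_into_core:
  assumes "3 dvd n" "x \<in> std_stack n"
  shows "std_fold x \<in> std_core n"
proof -
  obtain i a where x: "x = (i, a)" and i: "i \<le> n" and a: "a \<in> {0,1,2}"
    using assms(2) unfolding std_stack_def by blast
  show ?thesis
  proof (cases i rule: mod3_cases)
    case (0 t)
    then show ?thesis using i a unfolding x 0 std_fold_simps by (auto simp: std_core_def)
  next
    case (1 t)
    then have "3 * t + 2 \<le> n" using assms(1) i by presburger
    then show ?thesis using a unfolding x 1 std_fold_simps by (auto simp: std_core_def mod_Suc)
  next
    case (2 t)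
    then have "3 * t + 3 \<le> n" using assms(1) i by presburger
    then show ?thesis using a unfolding x 2 std_fold_simps by (auto simp: std_core_def mod_Suc)
  qed
qed

lemma std_fold_core:
  assumes "x \<in> std_core n" shows "std_fold x = x"
  using assms
proof (cases rule: std_core_cases)
  case (lower t a)
  then show ?thesis using std_fold_simps(1)[of t a] by auto
next
  case (upper1 t)
  then show ?thesis using std_fold_simps(2)[of t 2] by simp
next
  case (upper2 t)
  then show ?thesis using std_fold_simps(3)[of t 2] by simp
qed

lemma std_core_subset: "std_core n \<subseteq> std_stack n"
  unfolding std_core_def std_stack_def by (auto split: if_splits)

lemma is_retract_std_core:
  assumes "3 dvd n"
  shows "is_retract (std_stack n) std_stack_le (std_core n)"
  unfolding is_retract_def
  using std_core_subset std_fold_into_core[OF assms] std_fold_mono std_fold_core by blast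

lemma std_stack_le_iff_tower4_le:
  assumes "x \<in> std_core n" "y \<in> std_core n"
  shows "std_stack_le x y \<longleftrightarrow> tower4_le (core_to_tower x) (core_to_tower y)"
  by (cases rule: std_core_cases[OF assms(1)]; cases rule: std_core_cases[OF assms(2)];
      hypsubst_thin; simp only: core_to_tower_simps std_stack_le_def tower4_le_def; simp)
    presburger+

lemma core_to_tower_bij:
  assumes "3 dvd n"
  shows "bij_betw core_to_tower (std_core n) (tower4 (2 * (n div 3) + 1))"
proof -
  obtain m where n: "n = 3 * m" using assms by blast
  have "inj_on core_to_tower (std_core n)"
  proof
    fix x y assume "x \<in> std_core n" "y \<in> std_core n" "core_to_tower x = core_to_tower y"
    then have "std_stack_le x y" "std_stack_le y x"
      using std_stack_le_iff_tower4_le unfolding tower4_le_def by auto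
    then show "x = y" unfolding std_stack_le_def by auto
  qed
  moreover have "core_to_tower x \<in> tower4 (2 * m + 1)" if "x \<in> std_core n" for x
    using that by (cases rule: std_core_cases; hypsubst_thin; unfold core_to_tower_simps)
      (auto simp: tower4_def n)
  moreover have "z \<in> core_to_tower ` std_core n" if tz: "z \<in> tower4 (2 * m + 1)" for z
  proof -
    obtain k c where "z = (k, c)" by fastforce
    then have z: "z = (k, c)" "k < 2 * m + 1" "c \<in> {0,1}" using tz by (auto simp: tower4_def)
    have "\<exists>x\<in>std_core n. core_to_tower x = (k, c)"
    proof (cases "even k")
      case True
      then obtain t where t: "k = 2 * t" by blast
      then have "(3 * t, c) \<in> std_core n" using z by (auto simp: std_core_def n)
      then show ?thesis using core_to_tower_simps(1)[of t c] t by blast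
    next
      case False
      then obtain t where t: "k = 2 * t + 1" using oddE by blast
      then have "3 * t + 2 \<le> n" using z(2) n by simp
      then have "(3 * t + 1, 2) \<in> std_core n" "(3 * t + 2, 2) \<in> std_core n"
        by (simp_all add: std_core_def mod_Suc)
      then show ?thesis using core_to_tower_simps(2,3)[of t 2] t z(3) by auto
    qed
    then show ?thesis using z(1) by force
  qed
  ultimately show ?thesis unfolding bij_betw_def n by auto
qed

lemma is_four_tower_std_core: "3 dvd n \<Longrightarrow> is_four_tower (std_core n) std_stack_le"
  unfolding is_four_tower_def order_isomorphic_def
  using core_to_tower_bij std_stack_le_iff_tower4_le by fastforce

theorem corollary5p10:
  fixes P :: "'a set" and le :: "'a \<Rightarrow> 'a \<Rightarrow> bool" and n :: nat
  assumes "six_stack P le n"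
    and "3 dvd n"
  shows "\<exists>Q. is_retract P le Q \<and> is_four_tower Q le"
  using four_tower_retract_pullback[OF six_stack_order_isomorphic_std_stack[OF assms(1)]
      is_retract_std_core[OF assms(2)] is_four_tower_std_core[OF assms(2)]] .

end
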